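(* Let $G$ be a group with a regular gliding system such that there is an upper bound on the cardinality of sets of pairwise independent glides, and suppose $G$ (as a subset of itself) is oriented. Then for every $A\in G$ the typing homomorphism $\mu_A:\pi_1(X_G,A)\to\mathcal{A}(G)$ is injective.
   Context: Gliding system $(\mathcal{G},\mathcal{I})$ in $G$: $\mathcal{G}\subset G\setminus\{1\}$ closed under inversion (glides), $\mathcal{I}\subset\mathcal{G}\times\mathcal{G}$ (independence) with $(s^{-1},t),(t,s)\in\mathcal{I}$ and $st=ts\ne1$ whenever $(s,t)\in\mathcal{I}$; regular if every finite set of pairwise independent glides $S$ is cubic, i.e. $\prod_{t\in T_1}t\ne\prod_{t\in T_2}t$ for distinct $T_1,T_2\subset S$. Glide complex $X_G$: cubed complex with one $k$-cube for each equivalence class of based cubes $(A,S)$ ($A\in G$, $S$ cubic of size $k$) under $(A,S)\sim([T]A,(S\setminus T)\cup\{t^{-1}:t\in T\})$, where $[T]=\prod_{t\in T}t$; vertices $[T]A$, faces cubes of $(A,S')$, $S'\subset S$; 1-cells join $A$ and $sA$. $\mathcal{A}(G)$: right-angled Artin group with generators $g_s$ ($s\in\mathcal{G}$), relations $g_sg_t=g_tg_s$ for $(s,t)\in\mathcal{I}$. An orientation of $G$ directs every 1-cell of $X_G$ so that in every square with vertices $A,sA,tA,stA$ the 1-cells $A$–$sA$ and $tA$–$stA$ are both directed towards $sA,stA$ or both towards $A,tA$ (and likewise with $s,t$ exchanged). For a directed 1-cell $e$ from $A$ to $B$, $|e|=BA^{-1}$. For an edge path through $e_1,\dots,e_n$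 with $\nu_k=\pm1$ according to whether $e_k$ is traversed along or against its orientation, $\mu=g_{|e_1|}^{\nu_1}\cdots g_{|e_n|}^{\nu_n}$; on loops at $A$ this gives the typing homomorphism $\mu_A$. *)

theory Defs
  imports "HOL-Algebra.Group"
begin

definition pairwise_indep :: "'a set \<Rightarrow> ('a \<times> 'a) set \<Rightarrow> 'a set \<Rightarrow> bool" where
  "pairwise_indep Gl I S \<longleftrightarrow> S \<subseteq> Gl \<and> (\<forall>s\<in>S. \<forall>t\<in>S. s \<noteq> t \<longrightarrow> (s, t) \<in> I)"

text \<open>Product of a finite set of pairwise commuting elements (order irrelevant).\<close>
definition set_prod :: "('a, 'b) monoid_scheme \<Rightarrow> 'a set \<Rightarrow> 'a" where
  "set_prod G T = foldr (\<lambda>x y. x \<otimes>\<^bsub>G\<^esub> y) (SOME xs. distinct xs \<and> set xs = T) \<one>\<^bsub>G\<^esub>"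

definition cubic :: "('a, 'b) monoid_scheme \<Rightarrow> 'a set \<Rightarrow> bool" where
  "cubic G S \<longleftrightarrow> (\<forall>T1 T2. T1 \<subseteq> S \<longrightarrow> T2 \<subseteq> S \<longrightarrow> T1 \<noteq> T2 \<longrightarrow> set_prod G T1 \<noteq> set_prod G T2)"

definition gliding_system :: "('a, 'b) monoid_scheme \<Rightarrow> 'a set \<Rightarrow> ('a \<times> 'a) set \<Rightarrow> bool" where
  "gliding_system G Gl I \<longleftrightarrow>
     Gl \<subseteq> carrier G - {\<one>\<^bsub>G\<^esub>} \<and>
     (\<forall>s\<in>Gl. inv\<^bsub>G\<^esub> s \<in> Gl) \<and>
     I \<subseteq> Gl \<times> Gl \<and>
     (\<forall>(s, t)\<in>I. (inv\<^bsub>G\<^esub> s, t) \<in> I \<and> (t, s) \<in> I \<and>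
        s \<otimes>\<^bsub>G\<^esub> t = t \<otimes>\<^bsub>G\<^esub> s \<and> s \<otimes>\<^bsub>G\<^esub> t \<noteq> \<one>\<^bsub>G\<^esub>)"

definition regular_gliding :: "('a, 'b) monoid_scheme \<Rightarrow> 'a set \<Rightarrow> ('a \<times> 'a) set \<Rightarrow> bool" where
  "regular_gliding G Gl I \<longleftrightarrow> (\<forall>S. finite S \<longrightarrow> pairwise_indep Gl I S \<longrightarrow> cubic G S)"

text \<open>Vertices of X_G are the elements of G; A and B are joined by a (unique) 1-cell
  iff B A^{-1} is a glide.\<close>
definition adjacent :: "('a, 'b) monoid_scheme \<Rightarrow> 'a set \<Rightarrow> 'a \<Rightarrow> 'a \<Rightarrow> bool" where
  "adjacent G Gl A B \<longleftrightarrow> A \<in> carrier G \<and> B \<in> carrier G \<and> B \<otimes>\<^bsub>G\<^esub> inv\<^bsub>G\<^esub> A \<in> Gl"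

fun edge_path :: "('a, 'b) monoid_scheme \<Rightarrow> 'a set \<Rightarrow> 'a list \<Rightarrow> bool" where
  "edge_path G Gl [] = False"
| "edge_path G Gl [v] = (v \<in> carrier G)"
| "edge_path G Gl (v # w # vs) = (adjacent G Gl v w \<and> edge_path G Gl (w # vs))"

definition loop_at :: "('a, 'b) monoid_scheme \<Rightarrow> 'a set \<Rightarrow> 'a \<Rightarrow> 'a list \<Rightarrow> bool" where
  "loop_at G Gl A p \<longleftrightarrow> edge_path G Gl p \<and> hd p = A \<and> last p = A"

text \<open>Elementary homotopies: removing a backtrack, and pushing a path across a square
  (2-cube of a based cube (A,{s,t}) with s, t independent).\<close>
inductive path_move :: "('a, 'b) monoid_scheme \<Rightarrow> 'a set \<Rightarrow> ('a \<times> 'a) set \<Rightarrow> 'a list \<Rightarrow> 'a list \<Rightarrow> bool"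
  for G Gl I where
  backtrack: "adjacent G Gl v w \<Longrightarrow> path_move G Gl I (xs @ [v, w, v] @ ys) (xs @ [v] @ ys)"
| square: "A \<in> carrier G \<Longrightarrow> (s, t) \<in> I \<Longrightarrow> s \<noteq> t \<Longrightarrow>
    path_move G Gl I (xs @ [A, s \<otimes>\<^bsub>G\<^esub> A, t \<otimes>\<^bsub>G\<^esub> (s \<otimes>\<^bsub>G\<^esub> A)] @ ys)
                     (xs @ [A, t \<otimes>\<^bsub>G\<^esub> A, s \<otimes>\<^bsub>G\<^esub> (t \<otimes>\<^bsub>G\<^esub> A)] @ ys)"

text \<open>Homotopy rel endpoints of edge paths in X_G (only the 2-skeleton matters for pi_1).\<close>
definition homotopic :: "('a, 'b) monoid_scheme \<Rightarrow> 'a set \<Rightarrow> ('a \<times> 'a) set \<Rightarrow> 'a list \<Rightarrow> 'a list \<Rightarrow> bool" where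
  "homotopic G Gl I = equivclp (path_move G Gl I)"

text \<open>Words in the generators g_s^{\<plusminus>1}: (s, True) is g_s, (s, False) is g_s^{-1}.\<close>
inductive raag_step :: "'a set \<Rightarrow> ('a \<times> 'a) set \<Rightarrow> ('a \<times> bool) list \<Rightarrow> ('a \<times> bool) list \<Rightarrow> bool"
  for Gl I where
  cancel: "s \<in> Gl \<Longrightarrow> raag_step Gl I (u @ [(s, b), (s, \<not> b)] @ v) (u @ v)"
| commute: "(s, t) \<in> I \<Longrightarrow> raag_step Gl I (u @ [(s, b), (t, c)] @ v) (u @ [(t, c), (s, b)] @ v)"

definition raag_eq :: "'a set \<Rightarrow> ('a \<times> 'a) set \<Rightarrow> ('a \<times> bool) list \<Rightarrow> ('a \<times> bool) list \<Rightarrow> bool" where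
  "raag_eq Gl I = equivclp (raag_step Gl I)"

text \<open>Ori is the set of directed 1-cells (A,B) (directed from A to B).\<close>
definition orientation :: "('a, 'b) monoid_scheme \<Rightarrow> 'a set \<Rightarrow> ('a \<times> 'a) set \<Rightarrow> ('a \<times> 'a) set \<Rightarrow> bool" where
  "orientation G Gl I Ori \<longleftrightarrow>
     (\<forall>(A, B)\<in>Ori. adjacent G Gl A B) \<and>
     (\<forall>A B. adjacent G Gl A B \<longrightarrow> ((A, B) \<in> Ori \<longleftrightarrow> (B, A) \<notin> Ori)) \<and>
     (\<forall>A\<in>carrier G. \<forall>(s, t)\<in>I. s \<noteq> t \<longrightarrow>
        ((A, s \<otimes>\<^bsub>G\<^esub> A) \<in> Ori \<longleftrightarrow> (t \<otimes>\<^bsub>G\<^esub> A, s \<otimes>\<^bsub>G\<^esub> (t \<otimes>\<^bsub>G\<^esub> A)) \<in> Ori))"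

text \<open>mu of an edge path: the letter g_{|e|}^{\<nu>} for each traversed 1-cell e, where
  |e| = B A^{-1} for e directed from A to B.\<close>
fun typing :: "('a, 'b) monoid_scheme \<Rightarrow> ('a \<times> 'a) set \<Rightarrow> 'a list \<Rightarrow> ('a \<times> bool) list" where
  "typing G Ori (v # w # vs) =
     (if (v, w) \<in> Ori then (w \<otimes>\<^bsub>G\<^esub> inv\<^bsub>G\<^esub> v, True) else (v \<otimes>\<^bsub>G\<^esub> inv\<^bsub>G\<^esub> w, False))
     # typing G Ori (w # vs)"
| "typing G Ori _ = []"

end

theory Submission
  imports Defs
begin

text \<open>Words in the generators of \<open>\<A>(G)\<close> have a normal form up to commuting adjacent
  independent letters: push the letters onto the empty word from the right, and let each new
  letter \<open>a\<close> cancel against the first \<open>a\<^sup>-\<^sup>1\<close> it can be commuted up to. This is invariant under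
  the defining relations of \<open>\<A>(G)\<close>, so words equal in \<open>\<A>(G)\<close> have swap-equivalent normal forms.
  On the side of \<open>X\<^sub>G\<close>, a swap of the type of an edge path is realised by a square (the orientation
  is parallel across squares), and a cancellation by a backtrack, so every edge path is homotopic
  to one typed by the normal form of its type. Since the type of an edge path from a given vertex
  determines the path, two loops at \<open>A\<close> with equal images in \<open>\<A>(G)\<close> are homotopic.\<close>

type_synonym 'a letter = "'a \<times> bool"

definition letter_inv :: "'a letter \<Rightarrow> 'a letter" where
  "letter_inv x = (fst x, \<not> snd x)"

lemma letter_inv_inv [simp]: "letter_inv (letter_inv x) = x"
  by (simp add: letter_inv_def)

lemma fst_letter_inv [simp]: "fst (letter_inv x) = fst x"
  by (simp add: letter_inv_def)

definition letters_commute :: "('a \<times> 'a) set \<Rightarrow> 'a letter \<Rightarrow> 'a letter \<Rightarrow> bool" where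
  "letters_commute I x y \<longleftrightarrow> (fst x, fst y) \<in> I"

lemma letters_commute_letter_inv [simp]:
  "letters_commute I (letter_inv x) y = letters_commute I x y"
  "letters_commute I x (letter_inv y) = letters_commute I x y"
  by (simp_all add: letters_commute_def)

inductive letter_swap :: "('a \<times> 'a) set \<Rightarrow> 'a letter list \<Rightarrow> 'a letter list \<Rightarrow> bool"
  for I where
  "letters_commute I x y \<Longrightarrow> letter_swap I (u @ [x, y] @ v) (u @ [y, x] @ v)"

abbreviation swap_equiv :: "('a \<times> 'a) set \<Rightarrow> 'a letter list \<Rightarrow> 'a letter list \<Rightarrow> bool" where
  "swap_equiv I \<equiv> equivclp (letter_swap I)"

lemma letter_swap_Cons: "letter_swap I w w' \<Longrightarrow> letter_swap I (z # w) (z # w')"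
  by (induction rule: letter_swap.induct) (metis append_Cons letter_swap.intros)

lemma swap_equiv_Cons: "swap_equiv I w w' \<Longrightarrow> swap_equiv I (z # w) (z # w')"
proof (induction rule: equivclp_induct)
  case (step y y')
  then show ?case
    by (metis equivclp_into_equivclp letter_swap_Cons symclp_def)
qed simp

fun cancel_with :: "('a \<times> 'a) set \<Rightarrow> 'a letter \<Rightarrow> 'a letter list \<Rightarrow> 'a letter list option" where
  "cancel_with I a [] = None"
| "cancel_with I a (x # w) =
     (if x = letter_inv a then Some w
      else if letters_commute I a x then map_option (Cons x) (cancel_with I a w) else None)"

definition push_letter :: "('a \<times> 'a) set \<Rightarrow> 'a letter \<Rightarrow> 'a letter list \<Rightarrow> 'a letter list" where
  "push_letter I a w = (case cancel_with I a w of None \<Rightarrow> a # w | Some r \<Rightarrow> r)"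

definition raag_normal :: "('a \<times> 'a) set \<Rightarrow> 'a letter list \<Rightarrow> 'a letter list" where
  "raag_normal I w = foldr (push_letter I) w []"

fun cancellation_free :: "('a \<times> 'a) set \<Rightarrow> 'a letter list \<Rightarrow> bool" where
  "cancellation_free I [] = True"
| "cancellation_free I (x # w) \<longleftrightarrow> cancellation_free I w \<and> cancel_with I x w = None"

lemma append_eq_append_single_cases:
  "u @ v = m @ [c] @ v' \<Longrightarrow>
   (\<exists>u'. u = m @ [c] @ u' \<and> v' = u' @ v) \<or> (\<exists>m'. m = u @ m' \<and> v = m' @ [c] @ v')"
  by (auto simp: append_eq_append_conv2 Cons_eq_append_conv append_eq_Cons_conv)

lemma append_single_eq_append_single_cases:
  "u @ [a] @ v = u' @ [b] @ v' \<Longrightarrow> a \<noteq> b \<Longrightarrow>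
   (\<exists>m. u' = u @ [a] @ m \<and> v = m @ [b] @ v') \<or> (\<exists>m. u = u' @ [b] @ m \<and> v' = m @ [a] @ v)"
  by (auto simp: append_eq_append_conv2 Cons_eq_append_conv append_eq_Cons_conv)

locale independence =
  fixes I :: "('a \<times> 'a) set"
  assumes sym_indep: "sym I" and irrefl_indep: "irrefl I"
begin

lemma letters_commute_sym: "letters_commute I x y \<Longrightarrow> letters_commute I y x"
  using sym_indep by (auto simp: letters_commute_def dest: symD)

lemma letters_commute_fst_neq: "letters_commute I x y \<Longrightarrow> fst x \<noteq> fst y"
  using irrefl_indep by (auto simp: letters_commute_def irrefl_def)

lemma letter_swap_sym: "letter_swap I w w' \<Longrightarrow> letter_swap I w' w"
  by (induction rule: letter_swap.induct) (metis letters_commute_sym letter_swap.intros)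

lemma cancel_with_Some_iff:
  "cancel_with I a w = Some r \<longleftrightarrow>
   (\<exists>u v. w = u @ [letter_inv a] @ v \<and> (\<forall>x\<in>set u. letters_commute I a x) \<and> r = u @ v)"
proof
  show "cancel_with I a w = Some r \<Longrightarrow>
        \<exists>u v. w = u @ [letter_inv a] @ v \<and> (\<forall>x\<in>set u. letters_commute I a x) \<and> r = u @ v"
  proof (induction w arbitrary: r)
    case (Cons x w)
    show ?case
    proof (cases "x = letter_inv a")
      case True
      then show ?thesis using Cons.prems by (intro exI[of _ "[]"] exI[of _ w]) auto
    next
      case False
      with Cons.prems obtain r' where
        "letters_commute I a x" "cancel_with I a w = Some r'" "r = x # r'"
        by (auto split: if_splits)
      with Cons.IH show ?thesis by (metis Cons_eq_appendI set_ConsD)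
    qed
  qed simp
next
  assume "\<exists>u v. w = u @ [letter_inv a] @ v \<and> (\<forall>x\<in>set u. letters_commute I a x) \<and> r = u @ v"
  then obtain u v where "w = u @ [letter_inv a] @ v" "\<forall>x\<in>set u. letters_commute I a x" "r = u @ v"
    by blast
  then show "cancel_with I a w = Some r"
  proof (induction u arbitrary: w r)
    case (Cons y u)
    then have "y \<noteq> letter_inv a"
      by (metis letters_commute_fst_neq fst_letter_inv list.set_intros(1))
    with Cons show ?case by auto
  qed simp
qed

lemma cancel_with_None_iff:
  "cancel_with I a w = None \<longleftrightarrow>
   \<not> (\<exists>u v. w = u @ [letter_inv a] @ v \<and> (\<forall>x\<in>set u. letters_commute I a x))"
  by (metis cancel_with_Some_iff not_None_eq)

lemma cancel_with_letter_swap: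
  assumes "letter_swap I w w'"
  shows "rel_option (\<lambda>r r'. r = r' \<or> letter_swap I r r')
           (cancel_with I a w) (cancel_with I a w')"
  using assms
proof (induction rule: letter_swap.induct)
  case (1 x y u v)
  then show ?case
  proof (induction u)
    case Nil
    then have "fst x \<noteq> fst y"
      by (rule letters_commute_fst_neq)
    with Nil show ?case
      using letter_swap.intros[of I x y "[]"] letters_commute_sym
      by (auto simp: letters_commute_def option.rel_map intro: option.rel_refl)
  next
    case (Cons z u)
    then show ?case
      using letter_swap.intros[OF Cons.prems, of u v]
      by (auto simp: option.rel_map elim: option.rel_mono_strong intro: letter_swap_Cons)
  qed
qed

lemma push_letter_swap_equiv:
  "swap_equiv I w w' \<Longrightarrow> swap_equiv I (push_letter I a w) (push_letter I a w')"
proof (induction rule: equivclp_induct)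
  case (step y z)
  have "swap_equiv I (push_letter I a y) (push_letter I a z)" if "letter_swap I y z" for y z
    using cancel_with_letter_swap[OF that, of a] that
    by (auto simp: push_letter_def option.rel_sel split: option.splits
             intro: r_into_equivclp letter_swap_Cons)
  with step show ?case
    by (metis equivclp_sym equivclp_trans letter_swap_sym symclp_def)
qed simp

lemma foldr_push_letter_swap_equiv:
  "swap_equiv I z z' \<Longrightarrow> swap_equiv I (foldr (push_letter I) u z) (foldr (push_letter I) u z')"
  by (induction u) (auto intro: push_letter_swap_equiv)

lemma swap_equiv_move_front:
  "\<forall>x\<in>set u. letters_commute I b x \<Longrightarrow> swap_equiv I (u @ [b] @ v) (b # u @ v)"
proof (induction u)
  case (Cons y u)
  then have "swap_equiv I (y # u @ [b] @ v) (y # b # u @ v)"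
    by (auto intro: swap_equiv_Cons)
  moreover have "letter_swap I (y # b # u @ v) (b # y # u @ v)"
    using Cons.prems letters_commute_sym letter_swap.intros[of I y b "[]" "u @ v"] by auto
  ultimately show ?case
    using equivclp_into_equivclp by fastforce
qed simp

lemma cancel_with_None_delete:
  assumes none: "cancel_with I y (u @ [b] @ v) = None" and yb: "letters_commute I y b"
  shows "cancel_with I y (u @ v) = None"
proof (rule ccontr)
  assume "cancel_with I y (u @ v) \<noteq> None"
  then obtain m v' where
    m: "u @ v = m @ [letter_inv y] @ v'" "\<forall>x\<in>set m. letters_commute I y x"
    by (metis cancel_with_Some_iff not_None_eq)
  from append_eq_append_single_cases[OF m(1)] show False
  proof (elim disjE exE conjE)
    fix u' assume "u = m @ [letter_inv y] @ u'"
    then have "u @ [b] @ v = m @ [letter_inv y] @ (u' @ [b] @ v)" by simp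
    with none m(2) show False by (metis cancel_with_None_iff)
  next
    fix m' assume "m = u @ m'" "v = m' @ [letter_inv y] @ v'"
    then have "u @ [b] @ v = (u @ [b] @ m') @ [letter_inv y] @ v'"
      and "\<forall>x\<in>set (u @ [b] @ m'). letters_commute I y x"
      using m(2) yb by auto
    with none show False by (metis cancel_with_None_iff)
  qed
qed

lemma cancellation_free_appendD: "cancellation_free I (u @ w) \<Longrightarrow> cancellation_free I w"
  by (induction u) auto

lemma cancellation_free_delete:
  "cancellation_free I (u @ [b] @ v) \<Longrightarrow> \<forall>x\<in>set u. letters_commute I b x \<Longrightarrow>
   cancellation_free I (u @ v)"
proof (induction u)
  case (Cons y u)
  then show ?case
    using cancel_with_None_delete[of y u b v] letters_commute_sym by auto
qed simp

lemma cancellation_free_push_letter: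
  "cancellation_free I w \<Longrightarrow> cancellation_free I (push_letter I a w)"
  using cancellation_free_delete[of _ "letter_inv a"]
  by (auto simp: push_letter_def cancel_with_Some_iff split: option.splits)

lemma cancellation_free_raag_normal: "cancellation_free I (raag_normal I w)"
  unfolding raag_normal_def by (induction w) (auto intro: cancellation_free_push_letter)

lemma push_letter_inv:
  assumes free: "cancellation_free I w"
  shows "swap_equiv I (push_letter I (letter_inv a) (push_letter I a w)) w"
proof (cases "cancel_with I a w")
  case None
  then show ?thesis by (simp add: push_letter_def)
next
  case (Some r)
  then obtain u v where w: "w = u @ [letter_inv a] @ v"
    and u: "\<forall>x\<in>set u. letters_commute I a x" and r: "r = u @ v"
    using cancel_with_Some_iff by blast
  have "cancel_with I (letter_inv a) (u @ v) = None"
  proof (rule ccontr)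
    assume "cancel_with I (letter_inv a) (u @ v) \<noteq> None"
    then obtain m v' where m: "u @ v = m @ [a] @ v'" "\<forall>x\<in>set m. letters_commute I a x"
      by (metis cancel_with_Some_iff letter_inv_inv letters_commute_letter_inv(1) not_None_eq)
    from append_eq_append_single_cases[OF m(1)] show False
    proof (elim disjE exE conjE)
      fix u' assume "u = m @ [a] @ u'"
      with u show False by (auto dest: letters_commute_fst_neq)
    next
      fix m' assume "m = u @ m'" "v = m' @ [a] @ v'"
      moreover have "cancellation_free I (letter_inv a # v)"
        using free w cancellation_free_appendD[of u "letter_inv a # v"] by simp
      ultimately show False
        using m(2) cancel_with_None_iff[of "letter_inv a" "m' @ [a] @ v'"] by auto
    qed
  qed
  then have "push_letter I (letter_inv a) (push_letter I a w) = letter_inv a # u @ v"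
    using Some r by (simp add: push_letter_def)
  with w u swap_equiv_move_front[of u "letter_inv a" v] show ?thesis
    by (simp add: equivclp_sym)
qed

lemma push_letter_commute_cancelling:
  assumes xy: "letters_commute I x y" and cancel: "cancel_with I y z = Some r"
  shows "push_letter I x (push_letter I y z) = push_letter I y (push_letter I x z)"
proof -
  obtain u v where z: "z = u @ [letter_inv y] @ v"
    and u: "\<forall>w\<in>set u. letters_commute I y w" and r: "r = u @ v"
    using cancel cancel_with_Some_iff by blast
  have push_y: "push_letter I y z = u @ v"
    using cancel r by (simp add: push_letter_def)
  have "fst x \<noteq> fst y"
    using xy by (rule letters_commute_fst_neq)
  show ?thesis
  proof (cases "cancel_with I x z")
    case None
    then have "cancel_with I x (u @ v) = None"
      using cancel_with_None_delete[of x u "letter_inv y" v] xy z by simp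
    moreover have "cancel_with I y (x # z) = Some (x # u @ v)"
      using cancel r \<open>fst x \<noteq> fst y\<close> letters_commute_sym[OF xy] by auto
    ultimately show ?thesis
      using None push_y by (simp add: push_letter_def)
  next
    case (Some r')
    then obtain u' v' where z': "z = u' @ [letter_inv x] @ v'"
      and u': "\<forall>w\<in>set u'. letters_commute I x w" and r': "r' = u' @ v'"
      using cancel_with_Some_iff by blast
    have push_x: "push_letter I x z = u' @ v'"
      using Some r' by (simp add: push_letter_def)
    have "letter_inv y \<noteq> letter_inv x"
      using \<open>fst x \<noteq> fst y\<close> by (metis fst_letter_inv)
    with z z' append_single_eq_append_single_cases[of u "letter_inv y" v u' "letter_inv x" v']
    consider (y_first) m where "u' = u @ [letter_inv y] @ m" "v = m @ [letter_inv x] @ v'"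
      | (x_first) m where "u = u' @ [letter_inv x] @ m" "v' = m @ [letter_inv y] @ v"
      by auto
    then show ?thesis
    proof cases
      case y_first
      have "cancel_with I x (u @ v) = Some (u @ m @ v')"
        using y_first u' by (subst cancel_with_Some_iff) (rule exI[of _ "u @ m"], auto)
      moreover have "cancel_with I y (u' @ v') = Some (u @ m @ v')"
        using y_first u by (subst cancel_with_Some_iff) (rule exI[of _ u], auto)
      ultimately show ?thesis
        using push_x push_y by (simp add: push_letter_def)
    next
      case x_first
      have "cancel_with I x (u @ v) = Some (u' @ m @ v)"
        using x_first u' by (subst cancel_with_Some_iff) (rule exI[of _ u'], auto)
      moreover have "cancel_with I y (u' @ v') = Some (u' @ m @ v)"
        using x_first u by (subst cancel_with_Some_iff) (rule exI[of _ "u' @ m"], auto)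
      ultimately show ?thesis
        using push_x push_y by (simp add: push_letter_def)
    qed
  qed
qed

lemma push_letter_commute:
  assumes xy: "letters_commute I x y"
  shows "swap_equiv I (push_letter I x (push_letter I y z))
                      (push_letter I y (push_letter I x z))"
proof (cases "cancel_with I y z")
  case (Some r)
  then show ?thesis
    using push_letter_commute_cancelling[OF xy] by simp
next
  case None
  show ?thesis
  proof (cases "cancel_with I x z")
    case (Some r)
    then show ?thesis
      using push_letter_commute_cancelling[OF letters_commute_sym[OF xy]] by simp
  next
    case None': None
    have "y \<noteq> letter_inv x" "x \<noteq> letter_inv y"
      using letters_commute_fst_neq[OF xy] by auto
    then have "push_letter I x (push_letter I y z) = x # y # z"
      and "push_letter I y (push_letter I x z) = y # x # z"
      using None None' xy letters_commute_sym[OF xy] by (auto simp: push_letter_def)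
    moreover have "letter_swap I (x # y # z) (y # x # z)"
      using letter_swap.intros[OF xy, of "[]" z] by simp
    ultimately show ?thesis by auto
  qed
qed

lemma raag_normal_raag_step:
  "raag_step Gl I w w' \<Longrightarrow> swap_equiv I (raag_normal I w) (raag_normal I w')"
proof (induction rule: raag_step.induct)
  case (cancel s u b v)
  have "swap_equiv I (push_letter I (s, b) (push_letter I (s, \<not> b) (raag_normal I v)))
          (raag_normal I v)"
    using push_letter_inv[OF cancellation_free_raag_normal[of v], of "(s, \<not> b)"]
    by (simp add: letter_inv_def)
  then show ?case
    unfolding raag_normal_def by (simp add: foldr_push_letter_swap_equiv)
next
  case (commute s t u b c v)
  then have "letters_commute I (s, b) (t, c)"
    by (simp add: letters_commute_def)
  from push_letter_commute[OF this] show ?case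
    unfolding raag_normal_def by (simp add: foldr_push_letter_swap_equiv)
qed

lemma raag_normal_raag_eq:
  "raag_eq Gl I w w' \<Longrightarrow> swap_equiv I (raag_normal I w) (raag_normal I w')"
  unfolding raag_eq_def
proof (induction rule: equivclp_induct)
  case (step y z)
  then show ?case
    by (metis equivclp_sym equivclp_trans raag_normal_raag_step symclp_def)
qed simp

end

definition edge_letter ::
    "('a, 'b) monoid_scheme \<Rightarrow> ('a \<times> 'a) set \<Rightarrow> 'a \<Rightarrow> 'a \<Rightarrow> 'a letter" where
  "edge_letter G Ori v w =
     (if (v, w) \<in> Ori then (w \<otimes>\<^bsub>G\<^esub> inv\<^bsub>G\<^esub> v, True) else (v \<otimes>\<^bsub>G\<^esub> inv\<^bsub>G\<^esub> w, False))"

lemma typing_Cons_Cons [simp]: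
  "typing G Ori (v # w # vs) = edge_letter G Ori v w # typing G Ori (w # vs)"
  by (simp add: edge_letter_def)

declare typing.simps(1) [simp del]

lemma path_move_Cons: "path_move G Gl I p q \<Longrightarrow> path_move G Gl I (z # p) (z # q)"
  by (induction rule: path_move.induct)
     (metis append_Cons path_move.backtrack, metis append_Cons path_move.square)

lemma homotopic_refl [simp]: "homotopic G Gl I p p"
  by (simp add: homotopic_def)

lemma homotopic_sym: "homotopic G Gl I p q \<Longrightarrow> homotopic G Gl I q p"
  unfolding homotopic_def by (rule equivclp_sym)

lemma homotopic_trans:
  "homotopic G Gl I p q \<Longrightarrow> homotopic G Gl I q r \<Longrightarrow> homotopic G Gl I p r"
  unfolding homotopic_def by (rule equivclp_trans)

lemma path_move_homotopic: "path_move G Gl I p q \<Longrightarrow> homotopic G Gl I p q"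
  unfolding homotopic_def by blast

lemma homotopic_Cons: "homotopic G Gl I p q \<Longrightarrow> homotopic G Gl I (z # p) (z # q)"
  unfolding homotopic_def
proof (induction rule: equivclp_induct)
  case (step y y')
  then show ?case
    by (metis equivclp_into_equivclp path_move_Cons symclp_def)
qed simp

locale oriented_gliding_system = group +
  fixes Gl :: "'a set" and I :: "('a \<times> 'a) set" and Ori :: "('a \<times> 'a) set"
  assumes gliding: "gliding_system G Gl I" and oriented: "orientation G Gl I Ori"
begin

lemma glide_closed: "s \<in> Gl \<Longrightarrow> s \<in> carrier G"
  using gliding unfolding gliding_system_def by auto

lemma indep_glides: "(s, t) \<in> I \<Longrightarrow> s \<in> Gl \<and> t \<in> Gl"
  using gliding unfolding gliding_system_def by auto

lemma
  assumes "(s, t) \<in> I"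
  shows indep_inv_left: "(inv s, t) \<in> I" and indep_sym: "(t, s) \<in> I"
    and indep_commute: "s \<otimes> t = t \<otimes> s" and indep_mult_neq_one: "s \<otimes> t \<noteq> \<one>"
  using gliding assms unfolding gliding_system_def by auto

lemma indep_inv_left_iff: "s \<in> carrier G \<Longrightarrow> (inv s, t) \<in> I \<longleftrightarrow> (s, t) \<in> I"
  using indep_inv_left[of "inv s" t] indep_inv_left[of s t] by auto

lemma indep_inv_right_iff: "t \<in> carrier G \<Longrightarrow> (s, inv t) \<in> I \<longleftrightarrow> (s, t) \<in> I"
  using indep_inv_left_iff[of t s] indep_sym by blast

sublocale independence I
proof
  show "sym I"
    using indep_sym by (auto intro: symI)
  have "(s, s) \<notin> I" for s
  proof
    assume "(s, s) \<in> I"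
    then have "(inv s, s) \<in> I" "s \<in> carrier G"
      using indep_inv_left indep_glides glide_closed by blast+
    then show False
      using indep_mult_neq_one[of "inv s" s] by simp
  qed
  then show "irrefl I"
    by (simp add: irrefl_def)
qed

lemma orientation_reverse: "adjacent G Gl v w \<Longrightarrow> (v, w) \<in> Ori \<longleftrightarrow> (w, v) \<notin> Ori"
  using oriented unfolding orientation_def by (elim conjE) blast

lemma orientation_square:
  "A \<in> carrier G \<Longrightarrow> (s, t) \<in> I \<Longrightarrow> s \<noteq> t \<Longrightarrow>
   (A, s \<otimes> A) \<in> Ori \<longleftrightarrow> (t \<otimes> A, s \<otimes> (t \<otimes> A)) \<in> Ori"
  using oriented unfolding orientation_def by (elim conjE) (drule (1) bspec, drule (1) bspec, simp)

lemma edge_letter_mult: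
  "a \<in> carrier G \<Longrightarrow> v \<in> carrier G \<Longrightarrow>
   edge_letter G Ori v (a \<otimes> v) = (if (v, a \<otimes> v) \<in> Ori then (a, True) else (inv a, False))"
proof -
  assume "a \<in> carrier G" "v \<in> carrier G"
  then have "a \<otimes> v \<otimes> inv v = a" "v \<otimes> inv (a \<otimes> v) = inv a"
    by (simp_all add: m_assoc inv_mult_group flip: m_assoc[of v])
  then show ?thesis
    by (simp add: edge_letter_def)
qed

lemma adjacent_sym: "adjacent G Gl v w \<Longrightarrow> adjacent G Gl w v"
  using gliding unfolding adjacent_def gliding_system_def
  by (auto simp: inv_mult_group)

lemma edge_letter_reverse:
  "adjacent G Gl v w \<Longrightarrow> edge_letter G Ori w v = letter_inv (edge_letter G Ori v w)"
  using orientation_reverse by (auto simp: edge_letter_def letter_inv_def)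

lemma edge_letter_inj:
  assumes "adjacent G Gl v w" "adjacent G Gl v w'"
    and "edge_letter G Ori v w = edge_letter G Ori v w'"
  shows "w = w'"
proof -
  have carrier: "v \<in> carrier G" "w \<in> carrier G" "w' \<in> carrier G"
    using assms unfolding adjacent_def by auto
  show ?thesis
  proof (cases "(v, w) \<in> Ori")
    case True
    then have "w \<otimes> inv v = w' \<otimes> inv v"
      using assms(3) unfolding edge_letter_def by (auto split: if_splits)
    then show ?thesis using carrier by simp
  next
    case False
    then have "v \<otimes> inv w = v \<otimes> inv w'"
      using assms(3) unfolding edge_letter_def by (auto split: if_splits)
    then have "inv w = inv w'" using carrier by simp
    then show ?thesis using carrier by (metis inv_inv)
  qed
qed

lemma commuting_edges_span_square:
  assumes vw: "adjacent G Gl v w" and wx: "adjacent G Gl w x"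
    and comm: "letters_commute I (edge_letter G Ori v w) (edge_letter G Ori w x)"
  obtains w' where "adjacent G Gl v w'" "adjacent G Gl w' x"
    "edge_letter G Ori v w' = edge_letter G Ori w x"
    "edge_letter G Ori w' x = edge_letter G Ori v w"
    "\<And>p. path_move G Gl I (v # w # x # p) (v # w' # x # p)"
proof -
  define s where "s = w \<otimes> inv v"
  define t where "t = x \<otimes> inv w"
  have carrier: "v \<in> carrier G" "w \<in> carrier G" "x \<in> carrier G"
    using vw wx unfolding adjacent_def by auto
  have glides: "s \<in> Gl" "t \<in> Gl"
    using vw wx unfolding adjacent_def s_def t_def by auto
  then have st_carrier: "s \<in> carrier G" "t \<in> carrier G"
    using glide_closed by auto
  have w: "w = s \<otimes> v" and x: "x = t \<otimes> w"
    using carrier by (simp_all add: s_def t_def m_assoc)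
  define w' where "w' = t \<otimes> v"
  have vw_letter: "edge_letter G Ori v w = (if (v, w) \<in> Ori then (s, True) else (inv s, False))"
    using edge_letter_mult[OF st_carrier(1) carrier(1)] w by simp
  have wx_letter: "edge_letter G Ori w x = (if (w, x) \<in> Ori then (t, True) else (inv t, False))"
    using edge_letter_mult[OF st_carrier(2) carrier(2)] x by simp
  have st: "(s, t) \<in> I"
    using comm st_carrier
    by (auto simp: vw_letter wx_letter letters_commute_def indep_inv_left_iff indep_inv_right_iff
             split: if_splits)
  have "s \<noteq> t"
    using st irrefl_indep by (auto simp: irrefl_def)
  have x': "x = s \<otimes> w'"
    using indep_commute[OF st] st_carrier carrier by (simp add: x w w'_def flip: m_assoc)
  have w'_carrier: "w' \<in> carrier G"
    using st_carrier carrier by (simp add: w'_def)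
  show ?thesis
  proof
    show "adjacent G Gl v w'"
      using st_carrier carrier glides by (simp add: adjacent_def w'_def m_assoc)
    show "adjacent G Gl w' x"
      using st_carrier w'_carrier glides by (simp add: adjacent_def x' m_assoc)
    have "(v, w) \<in> Ori \<longleftrightarrow> (w', x) \<in> Ori"
      using orientation_square[OF carrier(1) st \<open>s \<noteq> t\<close>] w x' w'_def by simp
    then show "edge_letter G Ori w' x = edge_letter G Ori v w"
      using edge_letter_mult[OF st_carrier(1) w'_carrier] x' vw_letter by simp
    have "(v, w') \<in> Ori \<longleftrightarrow> (w, x) \<in> Ori"
      using orientation_square[OF carrier(1) indep_sym[OF st]] \<open>s \<noteq> t\<close> w x w'_def
      by simp
    then show "edge_letter G Ori v w' = edge_letter G Ori w x"
      using edge_letter_mult[OF st_carrier(2) carrier(1)] w'_def wx_letter by simp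
    show "path_move G Gl I (v # w # x # p) (v # w' # x # p)" for p
      using path_move.square[OF carrier(1) st \<open>s \<noteq> t\<close>, where xs="[]" and ys=p] w x x' w'_def
      by simp
  qed
qed

lemma letter_swap_lifts:
  "edge_path G Gl (X # p) \<Longrightarrow> typing G Ori (X # p) = u @ [x, y] @ v \<Longrightarrow>
   letters_commute I x y \<Longrightarrow>
   \<exists>p'. edge_path G Gl (X # p') \<and> typing G Ori (X # p') = u @ [y, x] @ v \<and>
        homotopic G Gl I (X # p) (X # p')"
proof (induction u arbitrary: X p)
  case Nil
  then obtain Y Z p2 where p: "p = Y # Z # p2"
    by (cases p; cases "tl p") auto
  with Nil.prems have edges: "adjacent G Gl X Y" "adjacent G Gl Y Z" "edge_path G Gl (Z # p2)"
    and letters: "x = edge_letter G Ori X Y" "y = edge_letter G Ori Y Z"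
      "v = typing G Ori (Z # p2)"
    by auto
  obtain Y' where "adjacent G Gl X Y'" "adjacent G Gl Y' Z"
    "edge_letter G Ori X Y' = edge_letter G Ori Y Z"
    "edge_letter G Ori Y' Z = edge_letter G Ori X Y"
    "path_move G Gl I (X # Y # Z # p2) (X # Y' # Z # p2)"
    using commuting_edges_span_square[OF edges(1,2)] Nil.prems(3) letters by metis
  then show ?case
    using edges letters p by (intro exI[of _ "Y' # Z # p2"]) (auto intro: path_move_homotopic)
next
  case (Cons z u)
  then obtain Y p1 where p: "p = Y # p1"
    by (cases p) auto
  with Cons.prems have "adjacent G Gl X Y" "edge_path G Gl (Y # p1)"
    and "typing G Ori (Y # p1) = u @ [x, y] @ v" "z = edge_letter G Ori X Y"
    by auto
  with Cons.IH Cons.prems(3) obtain p1' where "edge_path G Gl (Y # p1')"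
    "typing G Ori (Y # p1') = u @ [y, x] @ v" "homotopic G Gl I (Y # p1) (Y # p1')"
    by blast
  with \<open>adjacent G Gl X Y\<close> \<open>z = edge_letter G Ori X Y\<close> show ?case
    using p by (intro exI[of _ "Y # p1'"]) (auto intro: homotopic_Cons)
qed

lemma swap_equiv_lifts:
  "swap_equiv I (typing G Ori (X # p)) w \<Longrightarrow> edge_path G Gl (X # p) \<Longrightarrow>
   \<exists>p'. edge_path G Gl (X # p') \<and> typing G Ori (X # p') = w \<and>
        homotopic G Gl I (X # p) (X # p')"
proof (induction rule: equivclp_induct)
  case base
  then show ?case by (intro exI[of _ p]) simp
next
  case (step w w')
  then obtain p' where p': "edge_path G Gl (X # p')" "typing G Ori (X # p') = w"
    "homotopic G Gl I (X # p) (X # p')"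
    by blast
  from step.hyps(2) have "letter_swap I w w'"
    using letter_swap_sym by (auto simp: symclp_def)
  then obtain u a b v where "letters_commute I a b" "w = u @ [a, b] @ v" "w' = u @ [b, a] @ v"
    by (cases rule: letter_swap.cases) blast
  then obtain p'' where "edge_path G Gl (X # p'')" "typing G Ori (X # p'') = w'"
    "homotopic G Gl I (X # p') (X # p'')"
    using letter_swap_lifts[OF p'(1)] p'(2) by blast
  then show ?case
    using p'(3) homotopic_trans by blast
qed

lemma raag_normal_lifts:
  "edge_path G Gl (X # p) \<Longrightarrow>
   \<exists>p'. edge_path G Gl (X # p') \<and>
        typing G Ori (X # p') = raag_normal I (typing G Ori (X # p)) \<and>
        homotopic G Gl I (X # p) (X # p')"
proof (induction p arbitrary: X)
  case Nil
  then show ?case by (intro exI[of _ "[]"]) (simp add: raag_normal_def)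
next
  case (Cons Y p)
  then have XY: "adjacent G Gl X Y" and "edge_path G Gl (Y # p)"
    by auto
  with Cons.IH obtain p' where p': "edge_path G Gl (Y # p')"
    "typing G Ori (Y # p') = raag_normal I (typing G Ori (Y # p))"
    "homotopic G Gl I (X # Y # p) (X # Y # p')"
    by (blast intro: homotopic_Cons)
  define a where "a = edge_letter G Ori X Y"
  define z where "z = raag_normal I (typing G Ori (Y # p))"
  have normal: "raag_normal I (typing G Ori (X # Y # p)) = push_letter I a z"
    by (simp add: raag_normal_def a_def z_def)
  show ?case
  proof (cases "cancel_with I a z")
    case None
    then show ?thesis
      using p' XY normal by (intro exI[of _ "Y # p'"]) (auto simp: push_letter_def a_def z_def)
  next
    case (Some r)
    then obtain u v where z: "z = u @ [letter_inv a] @ v" "\<forall>x\<in>set u. letters_commute I a x"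
      and "r = u @ v"
      using cancel_with_Some_iff by blast
    with Some have pushed: "push_letter I a z = u @ v"
      by (simp add: push_letter_def)
    from z have "swap_equiv I (typing G Ori (Y # p')) (letter_inv a # u @ v)"
      using p'(2) swap_equiv_move_front[of u "letter_inv a" v] by (simp add: z_def)
    then obtain p'' where p'': "edge_path G Gl (Y # p'')"
      "typing G Ori (Y # p'') = letter_inv a # u @ v" "homotopic G Gl I (Y # p') (Y # p'')"
      using swap_equiv_lifts p'(1) by blast
    then obtain Z q where p''_def: "p'' = Z # q"
      by (cases p'') auto
    with p'' have YZ: "adjacent G Gl Y Z" and "edge_path G Gl (Z # q)"
      and "edge_letter G Ori Y Z = edge_letter G Ori Y X" "typing G Ori (Z # q) = u @ v"
      using edge_letter_reverse[OF XY] by (auto simp: a_def)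
    moreover from this have "Z = X"
      using edge_letter_inj[OF YZ adjacent_sym[OF XY]] by blast
    moreover have "homotopic G Gl I (X # Y # X # q) (X # q)"
      using path_move.backtrack[OF XY, where xs="[]" and ys=q] by (simp add: path_move_homotopic)
    ultimately show ?thesis
      using p'(3) homotopic_Cons[OF p''(3), of X] p''_def normal pushed
      by (intro exI[of _ q]) (auto intro: homotopic_trans)
  qed
qed

lemma typing_determines_path:
  "edge_path G Gl (X # p) \<Longrightarrow> edge_path G Gl (X # q) \<Longrightarrow>
   typing G Ori (X # p) = typing G Ori (X # q) \<Longrightarrow> p = q"
proof (induction p arbitrary: X q)
  case Nil
  then show ?case by (cases q) auto
next
  case (Cons Y p)
  then obtain Y' q' where q: "q = Y' # q'"
    by (cases q) auto
  with Cons.prems have "Y = Y'"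
    using edge_letter_inj[of X Y Y'] by auto
  with Cons.prems Cons.IH[of Y q'] q show ?case
    by auto
qed

lemma homotopic_if_raag_eq_typing:
  assumes p: "edge_path G Gl p" and q: "edge_path G Gl q" and "hd p = hd q"
    and eq: "raag_eq Gl I (typing G Ori p) (typing G Ori q)"
  shows "homotopic G Gl I p q"
proof -
  obtain X p0 q0 where pq: "p = X # p0" "q = X # q0"
    using p q \<open>hd p = hd q\<close> by (cases p; cases q) auto
  obtain p' where p': "edge_path G Gl (X # p')"
    "typing G Ori (X # p') = raag_normal I (typing G Ori p)" "homotopic G Gl I p (X # p')"
    using raag_normal_lifts p pq by blast
  obtain q' where q': "edge_path G Gl (X # q')"
    "typing G Ori (X # q') = raag_normal I (typing G Ori q)" "homotopic G Gl I q (X # q')"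
    using raag_normal_lifts q pq by blast
  obtain q'' where q'': "edge_path G Gl (X # q'')"
    "typing G Ori (X # q'') = raag_normal I (typing G Ori p)"
    "homotopic G Gl I (X # q') (X # q'')"
    using swap_equiv_lifts[OF _ q'(1)] raag_normal_raag_eq[OF eq] q'(2) by (metis equivclp_sym)
  have "q'' = p'"
    using typing_determines_path[OF q''(1) p'(1)] q''(2) p'(2) by simp
  then show ?thesis
    using p'(3) q'(3) q''(3) by (metis homotopic_sym homotopic_trans)
qed

end

theorem corollary5p5:
  fixes G :: "('a, 'b) monoid_scheme"
    and Gl :: "'a set" and I :: "('a \<times> 'a) set" and Ori :: "('a \<times> 'a) set"
  assumes "group G"
    and "gliding_system G Gl I"
    and "regular_gliding G Gl I"
    and "\<exists>N::nat. \<forall>S. pairwise_indep Gl I S \<longrightarrow> finite S \<and> card S \<le> N"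
    and "orientation G Gl I Ori"
    and "A \<in> carrier G"
  shows "\<forall>p q. loop_at G Gl A p \<longrightarrow> loop_at G Gl A q \<longrightarrow>
           raag_eq Gl I (typing G Ori p) (typing G Ori q) \<longrightarrow> homotopic G Gl I p q"
proof -
  interpret oriented_gliding_system G Gl I Ori
    using assms(1,2,5)
    by (simp add: oriented_gliding_system_def oriented_gliding_system_axioms_def)
  show ?thesis
    unfolding loop_at_def using homotopic_if_raag_eq_typing by auto
qed

end
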